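(* Let $x_0<x_1<\cdots<x_6$ be real numbers and write $d_{i,j}=x_j-x_i$ for $i<j$. If $d_{0,1}d_{2,3}d_{3,4}d_{5,6}>d_{1,2}d_{4,5}d_{0,3}d_{3,6}$, then at least one of the following holds: (1) $d_{1,2}<\min\{d_{0,1},d_{2,3}\}$; (2) $d_{4,5}<\min\{d_{3,4},d_{5,6}\}$. *)

theory Defs
  imports Main Complex_Main
begin

end

theory Submission
  imports Defs
begin

text \<open>If (1) fails, then the middle gap of \<open>x\<^sub>0 < x\<^sub>1 < x\<^sub>2 < x\<^sub>3\<close> is at least one of
  the outer gaps, so \<open>d\<^sub>0\<^sub>1 d\<^sub>2\<^sub>3 \<le> d\<^sub>1\<^sub>2 d\<^sub>0\<^sub>3\<close>; likewise, if (2) fails, then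
  \<open>d\<^sub>3\<^sub>4 d\<^sub>5\<^sub>6 \<le> d\<^sub>4\<^sub>5 d\<^sub>3\<^sub>6\<close>. Multiplying the two inequalities contradicts the
  hypothesis.\<close>

lemma mult_le_mult_sum_if_min_le:
  fixes a b c :: real
  assumes "0 \<le> a" "0 \<le> b" "0 \<le> c" "min a c \<le> b"
  shows "a * c \<le> b * (a + b + c)"
proof (cases "a \<le> b")
  case True
  then have "a * c \<le> b * c" using assms by (simp add: mult_right_mono)
  also have "\<dots> \<le> b * (a + b + c)" using assms by (simp add: mult_left_mono)
  finally show ?thesis .
next
  case False
  then have "c \<le> b" using assms by auto
  then have "a * c \<le> a * b" using assms by (simp add: mult_left_mono)
  also have "\<dots> \<le> b * (a + b + c)" using assms by (simp add: algebra_simps)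
  finally show ?thesis .
qed

lemma outer_gaps_le_middle_gap_times_span:
  fixes x0 x1 x2 x3 :: real
  assumes "x0 \<le> x1" "x1 \<le> x2" "x2 \<le> x3" "min (x1 - x0) (x3 - x2) \<le> x2 - x1"
  shows "(x1 - x0) * (x3 - x2) \<le> (x2 - x1) * (x3 - x0)"
  using mult_le_mult_sum_if_min_le[of "x1 - x0" "x2 - x1" "x3 - x2"] assms by simp

theorem lemma3:
  fixes x0 x1 x2 x3 x4 x5 x6 :: real
  assumes "x0 < x1" "x1 < x2" "x2 < x3" "x3 < x4" "x4 < x5" "x5 < x6"
    and "(x1 - x0) * (x3 - x2) * (x4 - x3) * (x6 - x5)
         > (x2 - x1) * (x5 - x4) * (x3 - x0) * (x6 - x3)"
  shows "x2 - x1 < min (x1 - x0) (x3 - x2) \<or> x5 - x4 < min (x4 - x3) (x6 - x5)"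
proof (rule ccontr)
  assume "\<not> ?thesis"
  then have left: "(x1 - x0) * (x3 - x2) \<le> (x2 - x1) * (x3 - x0)"
    and right: "(x4 - x3) * (x6 - x5) \<le> (x5 - x4) * (x6 - x3)"
    using outer_gaps_le_middle_gap_times_span[of x0 x1 x2 x3]
      outer_gaps_le_middle_gap_times_span[of x3 x4 x5 x6] assms(1-6)
    by (simp_all only: not_less de_Morgan_disj less_imp_le)
  have "(x1 - x0) * (x3 - x2) * ((x4 - x3) * (x6 - x5))
      \<le> (x2 - x1) * (x3 - x0) * ((x5 - x4) * (x6 - x3))"
    using assms(1-6) by (intro mult_mono[OF left right]) simp_all
  then show False using assms(7) by (simp add: algebra_simps)
qed

end
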